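(* Let $1\le p<\infty$ and let $w$ be a weight on $\mathbb{R}^n$. The following are equivalent: (i) $M_0$ is bounded from $\mathcal M^{p}(\varphi,w)$ to $W\mathcal M^{p}(\varphi,w)$; (ii) $w\in A_{0}(\mathcal M^{p}(\varphi))$; (iii) $M_0$ is bounded on $\mathcal M^{p}(\varphi,w)$. Moreover, the operator norm of $M_0$ in (i) and in (iii) is comparable to $[w]_{A_{0}(\mathcal M^{p}(\varphi))}$, with constants independent of $w$.
   Context: A weight is a nonnegative locally integrable function on $\mathbb{R}^n$. Let $\varphi$ be a function from the set of Euclidean balls of $\mathbb{R}^n$ to $(0,\infty)$; standing assumptions: $\varphi$ is doubling ($\varphi(2B)\le C\varphi(B)$) and reverse doubling (there are $\delta>0$, $C$ with $\varphi(B_1)/\varphi(B_2)\le C(|B_1|/|B_2|)^\delta$ for balls $B_1\subset B_2$), and characteristic functions of balls belong to $\mathcal M^{p}(\varphi,w)$. $\mathcal M^{p}(\varphi,w)$ is the space of measurable $f$ with $\|f\|_{\mathcal M^{p}(\varphi,w)}:=\sup_B\big(\varphi(B)^{-1}\int_B|f|^pw\big)^{1/p}<\infty$ (supremum over all balls); $W\mathcal M^{p}(\varphi,w)$ is defined by $\|f\|_{W\mathcal M^{p}(\varphi,w)}:=\sup_B\sup_{t>0} t\, w(\{x\in B:|f(x)|>t\})^{1/p}\varphi(B)^{-1/p}<\infty$. Köthe dual: $\|g\|_{X'}:=\sup\{\int|fg|:\|f\|_X\le1\}$. $M_0f(x):=\sup_{r>|x|}|B(0,r)|^{-1}\int_{|y|<r}|f(y)|\,dy$.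 $[w]_{A_{0}(\mathcal M^{p}(\varphi))}:=\sup_B\|\chi_B\|_{\mathcal M^{p}(\varphi,w)}\|\chi_B\|_{\mathcal M^{p}(\varphi,w)'}/|B|$ with the supremum over balls $B$ centered at the origin; $A_0(\mathcal M^{p}(\varphi))$ is the class of weights with this finite. *)

theory Defs
  imports "HOL-Analysis.Analysis"
begin

definition epowr :: "ennreal \<Rightarrow> real \<Rightarrow> ennreal" where
  "epowr x a = (if x = \<infinity> then \<infinity> else ennreal (enn2real x powr a))"

definition is_ball :: "'a::euclidean_space set \<Rightarrow> bool" where
  "is_ball B \<longleftrightarrow> (\<exists>x r. r > 0 \<and> B = ball x r)"

definition admissible_phi :: "('a::euclidean_space set \<Rightarrow> real) \<Rightarrow> bool" where
  "admissible_phi \<phi> \<longleftrightarrow>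
     (\<forall>B. is_ball B \<longrightarrow> \<phi> B > 0) \<and>
     (\<exists>C. \<forall>x r. r > 0 \<longrightarrow> \<phi> (ball x (2 * r)) \<le> C * \<phi> (ball x r)) \<and>
     (\<exists>\<delta> C. \<delta> > 0 \<and> (\<forall>B1 B2. is_ball B1 \<longrightarrow> is_ball B2 \<longrightarrow> B1 \<subseteq> B2 \<longrightarrow>
          \<phi> B1 / \<phi> B2 \<le> C * (measure lebesgue B1 / measure lebesgue B2) powr \<delta>))"

definition weight :: "('a::euclidean_space \<Rightarrow> real) \<Rightarrow> bool" where
  "weight w \<longleftrightarrow> (\<forall>x. 0 \<le> w x) \<and> w \<in> borel_measurable lebesgue \<and>
     (\<forall>K. compact K \<longrightarrow> (\<integral>\<^sup>+ x\<in>K. ennreal (w x) \<partial>lebesgue) < \<infinity>)"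

definition wint :: "real \<Rightarrow> ('a::euclidean_space \<Rightarrow> real) \<Rightarrow> ('a \<Rightarrow> ennreal) \<Rightarrow> 'a set \<Rightarrow> ennreal" where
  "wint p w g B = (\<integral>\<^sup>+ x\<in>B. epowr (g x) p * ennreal (w x) \<partial>lebesgue)"

definition morrey_norm :: "real \<Rightarrow> ('a::euclidean_space set \<Rightarrow> real) \<Rightarrow> ('a \<Rightarrow> real) \<Rightarrow> ('a \<Rightarrow> ennreal) \<Rightarrow> ennreal" where
  "morrey_norm p \<phi> w g = (SUP B\<in>{B. is_ball B}. epowr (ennreal (1 / \<phi> B) * wint p w g B) (1 / p))"

definition weak_morrey_norm :: "real \<Rightarrow> ('a::euclidean_space set \<Rightarrow> real) \<Rightarrow> ('a \<Rightarrow> real) \<Rightarrow> ('a \<Rightarrow> ennreal) \<Rightarrow> ennreal" where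
  "weak_morrey_norm p \<phi> w g = (SUP (B, t)\<in>{(B, t). is_ball B \<and> t > 0}.
      ennreal t * epowr (\<integral>\<^sup>+ x\<in>{x\<in>B. g x > ennreal t}. ennreal (w x) \<partial>lebesgue) (1 / p)
      * ennreal (\<phi> B powr (- 1 / p)))"

definition in_morrey :: "real \<Rightarrow> ('a::euclidean_space set \<Rightarrow> real) \<Rightarrow> ('a \<Rightarrow> real) \<Rightarrow> ('a \<Rightarrow> real) \<Rightarrow> bool" where
  "in_morrey p \<phi> w f \<longleftrightarrow> f \<in> borel_measurable lebesgue \<and>
     morrey_norm p \<phi> w (\<lambda>x. ennreal \<bar>f x\<bar>) < \<infinity>"

definition morrey_dual_norm :: "real \<Rightarrow> ('a::euclidean_space set \<Rightarrow> real) \<Rightarrow> ('a \<Rightarrow> real) \<Rightarrow> ('a \<Rightarrow> real) \<Rightarrow> ennreal" where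
  "morrey_dual_norm p \<phi> w g = (SUP f\<in>{f. in_morrey p \<phi> w f \<and> morrey_norm p \<phi> w (\<lambda>x. ennreal \<bar>f x\<bar>) \<le> 1}.
      \<integral>\<^sup>+ x. ennreal \<bar>f x * g x\<bar> \<partial>lebesgue)"

definition M0 :: "('a::euclidean_space \<Rightarrow> real) \<Rightarrow> 'a \<Rightarrow> ennreal" where
  "M0 f x = (SUP r\<in>{r. r > norm x}.
      ennreal (1 / measure lebesgue (ball (0::'a) r)) * (\<integral>\<^sup>+ y\<in>ball 0 r. ennreal \<bar>f y\<bar> \<partial>lebesgue))"

definition A0_const :: "real \<Rightarrow> ('a::euclidean_space set \<Rightarrow> real) \<Rightarrow> ('a \<Rightarrow> real) \<Rightarrow> ennreal" where
  "A0_const p \<phi> w = (SUP r\<in>{r::real. r > 0}.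
      morrey_norm p \<phi> w (\<lambda>x. ennreal (indicator (ball (0::'a) r) x))
      * morrey_dual_norm p \<phi> w (indicator (ball 0 r))
      / emeasure lebesgue (ball (0::'a) r))"

definition M0_norm_weak :: "real \<Rightarrow> ('a::euclidean_space set \<Rightarrow> real) \<Rightarrow> ('a \<Rightarrow> real) \<Rightarrow> ennreal" where
  "M0_norm_weak p \<phi> w = Inf {K. \<forall>f. in_morrey p \<phi> w f \<longrightarrow>
      weak_morrey_norm p \<phi> w (M0 f) \<le> K * morrey_norm p \<phi> w (\<lambda>x. ennreal \<bar>f x\<bar>)}"

definition M0_norm_strong :: "real \<Rightarrow> ('a::euclidean_space set \<Rightarrow> real) \<Rightarrow> ('a \<Rightarrow> real) \<Rightarrow> ennreal" where
  "M0_norm_strong p \<phi> w = Inf {K. \<forall>f. in_morrey p \<phi> w f \<longrightarrow>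
      morrey_norm p \<phi> w (M0 f) \<le> K * morrey_norm p \<phi> w (\<lambda>x. ennreal \<bar>f x\<bar>)}"

definition M0_bounded_weak :: "real \<Rightarrow> ('a::euclidean_space set \<Rightarrow> real) \<Rightarrow> ('a \<Rightarrow> real) \<Rightarrow> bool" where
  "M0_bounded_weak p \<phi> w \<longleftrightarrow> (\<exists>K::real. \<forall>f. in_morrey p \<phi> w f \<longrightarrow>
      weak_morrey_norm p \<phi> w (M0 f) \<le> ennreal K * morrey_norm p \<phi> w (\<lambda>x. ennreal \<bar>f x\<bar>))"

definition M0_bounded_strong :: "real \<Rightarrow> ('a::euclidean_space set \<Rightarrow> real) \<Rightarrow> ('a \<Rightarrow> real) \<Rightarrow> bool" where
  "M0_bounded_strong p \<phi> w \<longleftrightarrow> (\<exists>K::real. \<forall>f. in_morrey p \<phi> w f \<longrightarrow>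
      morrey_norm p \<phi> w (M0 f) \<le> ennreal K * morrey_norm p \<phi> w (\<lambda>x. ennreal \<bar>f x\<bar>))"

definition in_A0 :: "real \<Rightarrow> ('a::euclidean_space set \<Rightarrow> real) \<Rightarrow> ('a \<Rightarrow> real) \<Rightarrow> bool" where
  "in_A0 p \<phi> w \<longleftrightarrow> A0_const p \<phi> w < \<infinity>"

end

theory Submission
  imports Defs
begin

(*
  Chebyshev's inequality bounds the weak norm of M_0 by its strong norm. Testing the weak bound
  on f with norm at most 1, on the ball B(0,r) where M_0 f dominates the mean of |f| over B(0,r),
  gives [w] <= weak norm, by the definition of the Koethe dual norm.

  Conversely, Koethe duality and homogeneity give
  ||chi_B(0,r)|| * int_B(0,r) |f| <= [w] |B(0,r)| ||f||.
  For x with rho <= 2|x| only radii r >= rho matter in M_0 f x, up to a factor 2^n, so on a set E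
  inside a ball E' and inside B(0,rho) this bounds (M_0 f)^p times the w-mean of E over phi(E').
  A ball B(c,R) with |c| >= 3R is such a set. A ball with |c| < 3R lies in B(0,4R), which is
  split into dyadic annuli about the origin; each annulus is such a set, the reverse doubling
  of phi makes the resulting series of phi-values geometric, and doubling compares its sum with
  phi(B(c,R)).
*)

section \<open>Extended nonnegative reals\<close>

lemma epowr_ennreal: "0 \<le> x \<Longrightarrow> epowr (ennreal x) q = ennreal (x powr q)"
  by (simp add: epowr_def)

lemma epowr_top [simp]: "epowr top q = top"
  by (simp add: epowr_def)

lemma epowr_zero_left [simp]: "epowr 0 q = 0"
  by (simp add: epowr_def)

lemma epowr_one_left [simp]: "epowr 1 q = 1"
  by (simp add: epowr_def)

lemma epowr_eq_0_iff:
  assumes "0 < q"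
  shows "epowr a q = 0 \<longleftrightarrow> a = 0"
proof (cases "a = top")
  case False
  then obtain x where "a = ennreal x" "0 \<le> x"
    by (metis ennreal_cases)
  then show ?thesis
    using assms by (simp add: epowr_ennreal ennreal_eq_0_iff)
qed simp

lemma epowr_mult:
  assumes "0 < q"
  shows "epowr (a * b) q = epowr a q * epowr b q"
proof (cases "a = top \<or> b = top")
  case True
  then show ?thesis
    using epowr_eq_0_iff[OF assms, of a] epowr_eq_0_iff[OF assms, of b]
    by (elim disjE) (simp_all add: ennreal_top_mult ennreal_mult_top)
next
  case False
  then obtain x y where "a = ennreal x" "b = ennreal y" "0 \<le> x" "0 \<le> y"
    by (metis ennreal_cases)
  then show ?thesis
    by (simp add: epowr_ennreal powr_mult ennreal_mult[symmetric])
qed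

lemma epowr_epowr: "epowr (epowr a q) r = epowr a (q * r)"
  by (cases a) (simp_all add: epowr_ennreal powr_powr)

lemma epowr_one_right [simp]: "epowr a 1 = a"
  by (cases a) (simp_all add: epowr_ennreal)

lemma epowr_epowr_inverse:
  assumes "q \<noteq> 0"
  shows "epowr (epowr a q) (1 / q) = a"
  using assms by (simp add: epowr_epowr)

lemma epowr_mono:
  assumes "0 < q" "a \<le> b"
  shows "epowr a q \<le> epowr b q"
proof (cases "b = top")
  case False
  then obtain y where y: "b = ennreal y" "0 \<le> y"
    by (metis ennreal_cases)
  moreover obtain x where x: "a = ennreal x" "0 \<le> x"
    using False assms(2) by (metis ennreal_cases top.extremum_uniqueI)
  ultimately have "x \<le> y"
    using assms(2) by simp
  then show ?thesis
    using x y assms(1) by (simp add: epowr_ennreal powr_mono2)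
qed simp

lemma epowr_le_iff_le_epowr:
  assumes "0 < p"
  shows "epowr a (1 / p) \<le> b \<longleftrightarrow> a \<le> epowr b p"
proof
  assume "epowr a (1 / p) \<le> b"
  then have "epowr (epowr a (1 / p)) p \<le> epowr b p"
    using assms by (intro epowr_mono)
  then show "a \<le> epowr b p"
    using assms by (simp add: epowr_epowr)
next
  assume "a \<le> epowr b p"
  then have "epowr a (1 / p) \<le> epowr (epowr b p) (1 / p)"
    using assms by (intro epowr_mono) auto
  then show "epowr a (1 / p) \<le> b"
    using assms by (simp add: epowr_epowr_inverse)
qed

lemma measurable_epowr [measurable]:
  assumes [measurable]: "g \<in> borel_measurable M"
  shows "(\<lambda>x. epowr (g x) q) \<in> borel_measurable M"
  unfolding epowr_def by measurable

lemma ennreal_inverse_mult_le_iff: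
  assumes "0 < c"
  shows "ennreal (1 / c) * a \<le> b \<longleftrightarrow> a \<le> b * ennreal c"
proof
  assume "ennreal (1 / c) * a \<le> b"
  then have "ennreal (1 / c) * a * ennreal c \<le> b * ennreal c"
    by (rule mult_right_mono) simp
  then show "a \<le> b * ennreal c"
    using assms by (simp add: ennreal_mult[symmetric] mult.commute mult.left_commute)
next
  assume "a \<le> b * ennreal c"
  then have "ennreal (1 / c) * a \<le> ennreal (1 / c) * (b * ennreal c)"
    by (rule mult_left_mono) simp
  then show "ennreal (1 / c) * a \<le> b"
    using assms by (simp add: ennreal_mult[symmetric] mult.commute mult.left_commute)
qed

lemma ennreal_le_mult_of_scaled_le:
  fixes a b R :: ennreal
  assumes scaled: "\<And>c. 0 < c \<Longrightarrow> ennreal c * b \<le> 1 \<Longrightarrow> ennreal c * a \<le> R"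
    and "b < top" "R < top"
  shows "a \<le> R * b"
proof (cases "b = 0")
  case True
  obtain r where r: "R = ennreal r" "0 \<le> r"
    using \<open>R < top\<close> by (cases R) auto
  have "a = 0"
  proof (rule ccontr)
    assume "a \<noteq> 0"
    then obtain y where y: "0 < y" "ennreal y \<le> a"
    proof (cases a)
      case (real r)
      then show ?thesis
        using that[of r] \<open>a \<noteq> 0\<close> by auto
    qed (use that[of 1] in simp)
    have "ennreal ((r + 1) / y) * ennreal y \<le> ennreal ((r + 1) / y) * a"
      using y(2) by (rule mult_left_mono) simp
    also have "\<dots> \<le> ennreal r"
      using scaled[of "(r + 1) / y"] y(1) r True by simp
    finally show False
      using y(1) r(2) by (simp add: ennreal_mult[symmetric])
  qed
  then show ?thesis by simp
next
  case False
  then obtain y where y: "b = ennreal y" "0 < y"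
    using \<open>b < top\<close> by (cases b) auto
  have "ennreal (1 / y) * a \<le> R"
    using scaled[of "1 / y"] y by (simp add: ennreal_mult[symmetric])
  then show ?thesis
    using y by (simp add: ennreal_inverse_mult_le_iff)
qed

lemma ennreal_mult_le_of_forall_less:
  fixes t N K :: ennreal
  assumes "\<And>s. 0 < s \<Longrightarrow> ennreal s < t \<Longrightarrow> ennreal s * N \<le> K"
  shows "t * N \<le> K"
proof -
  have "t * N = (SUP y\<in>{..<t}. y * N)"
    by (simp add: SUP_mult_right_ennreal[symmetric])
  also have "\<dots> \<le> K"
  proof (rule SUP_least)
    fix y assume "y \<in> {..<t}"
    then have "y < t" by simp
    then obtain s where s: "y = ennreal s" "0 \<le> s" "ennreal s < t"
      by (cases y) auto
    then show "y * N \<le> K"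
      using assms[of s] by (cases "s = 0") auto
  qed
  finally show ?thesis .
qed

lemma Inf_bound_less_top_iff:
  fixes a b :: "'f \<Rightarrow> ennreal"
  shows "Inf {K. \<forall>f. P f \<longrightarrow> a f \<le> K * b f} < top \<longleftrightarrow> (\<exists>K::real. \<forall>f. P f \<longrightarrow> a f \<le> ennreal K * b f)"
    (is "Inf ?S < top \<longleftrightarrow> _")
proof
  assume "Inf ?S < top"
  then obtain K where K: "K \<in> ?S" "K < top"
    unfolding Inf_less_iff by blast
  then obtain k where "K = ennreal k"
    using less_top ennreal_cases by metis
  with K(1) show "\<exists>K::real. \<forall>f. P f \<longrightarrow> a f \<le> ennreal K * b f"
    by blast
next
  assume "\<exists>K::real. \<forall>f. P f \<longrightarrow> a f \<le> ennreal K * b f"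
  then obtain K :: real where "ennreal K \<in> ?S"
    by blast
  then have "Inf ?S \<le> ennreal K"
    by (rule Inf_lower)
  then show "Inf ?S < top"
    using ennreal_less_top le_less_trans by blast
qed

section \<open>Balls and the maximal operator\<close>

lemma is_ball_ball [simp]: "is_ball (ball x r) \<longleftrightarrow> 0 < r"
proof
  assume "is_ball (ball x r)"
  then obtain y s where "0 < s" "ball x r = ball y s"
    unfolding is_ball_def by blast
  then have "y \<in> ball x r" by simp
  then show "0 < r" by (metis ball_empty empty_iff not_less)
qed (auto simp: is_ball_def)

lemma sets_lebesgue_ball [measurable]: "ball c r \<in> sets lebesgue"
  using lmeasurable_ball by (rule fmeasurableD)

lemma sets_lebesgue_is_ball: "is_ball B \<Longrightarrow> B \<in> sets lebesgue"
  by (auto simp: is_ball_def)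

lemma emeasure_lebesgue_ball:
  "emeasure lebesgue (ball c r) = ennreal (measure lebesgue (ball c r))"
  by (simp add: emeasure_eq_measure2)

lemma norm_bounds_of_mem_ball:
  assumes "y \<in> ball c R"
  shows "norm y < norm c + R" "norm c - R < norm y"
  using assms dist_triangle[of 0 c y] dist_triangle[of 0 y c] by (simp_all add: dist_commute)

lemma measure_ball_le_dilate:
  fixes c :: "'a::euclidean_space"
  assumes "0 \<le> r" "r' \<le> 2 * r"
  shows "measure lebesgue (ball c r') \<le> 2 ^ DIM('a) * measure lebesgue (ball c r)"
proof (cases "0 \<le> r'")
  case True
  have "measure lebesgue (ball c r') = r' ^ DIM('a) * measure lebesgue (ball (0::'a) 1)"
    using content_ball_conv_unit_ball[OF True, of c] by simp
  also have "\<dots> \<le> (2 * r) ^ DIM('a) * measure lebesgue (ball (0::'a) 1)"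
    using True assms by (intro mult_right_mono power_mono) auto
  also have "\<dots> = 2 ^ DIM('a) * measure lebesgue (ball c r)"
    using content_ball_conv_unit_ball[OF assms(1), of c] by (simp add: power_mult_distrib)
  finally show ?thesis .
qed (simp add: ball_empty)

lemma ball_average_le_dilate:
  fixes g :: "'a::euclidean_space \<Rightarrow> ennreal"
  assumes "0 < r" "r \<le> r'" "r' \<le> 2 * r"
  shows "ennreal (1 / measure lebesgue (ball c r)) * (\<integral>\<^sup>+ y\<in>ball c r. g y \<partial>lebesgue)
    \<le> ennreal (2 ^ DIM('a) / measure lebesgue (ball c r')) * (\<integral>\<^sup>+ y\<in>ball c r'. g y \<partial>lebesgue)"
proof (rule mult_mono)
  have pos: "0 < measure lebesgue (ball c r)" "0 < measure lebesgue (ball c r')"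
    using assms by (auto intro: content_ball_pos)
  have "1 / measure lebesgue (ball c r) = 2 ^ DIM('a) / (2 ^ DIM('a) * measure lebesgue (ball c r))"
    using pos by simp
  also have "\<dots> \<le> 2 ^ DIM('a) / measure lebesgue (ball c r')"
    using measure_ball_le_dilate[of r r' c] pos assms by (intro divide_left_mono) auto
  finally show "ennreal (1 / measure lebesgue (ball c r)) \<le> ennreal (2 ^ DIM('a) / measure lebesgue (ball c r'))"
    by (rule ennreal_leI)
  show "(\<integral>\<^sup>+ y\<in>ball c r. g y \<partial>lebesgue) \<le> (\<integral>\<^sup>+ y\<in>ball c r'. g y \<partial>lebesgue)"
    using assms(2) by (intro nn_set_integral_set_mono subset_ball)
qed auto

lemma disjoint_family_dyadic_annuli:
  fixes r :: real
  assumes "0 \<le> r"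
  shows "disjoint_family (\<lambda>k. ball (0::'a::real_normed_vector) (r / 2 ^ k) - ball 0 (r / 2 ^ Suc k))"
proof -
  have "disjoint_family (\<lambda>k. - ball (0::'a) (r / 2 ^ Suc k) - - ball 0 (r / 2 ^ k))"
    using assms by (intro disjoint_family_Suc compl_mono subset_ball) (simp add: divide_left_mono)
  then show ?thesis
    by (simp add: Diff_eq Int_commute)
qed

lemma Union_dyadic_annuli:
  fixes r :: real
  assumes "0 < r"
  shows "(\<Union>k. ball (0::'a::real_normed_vector) (r / 2 ^ k) - ball 0 (r / 2 ^ Suc k)) = ball 0 r - {0}"
proof
  show "(\<Union>k. ball (0::'a) (r / 2 ^ k) - ball 0 (r / 2 ^ Suc k)) \<subseteq> ball 0 r - {0}"
  proof (clarify)
    fix x :: 'a and k assume x: "x \<in> ball 0 (r / 2 ^ k)" "x \<notin> ball 0 (r / 2 ^ Suc k)"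
    have "r / 2 ^ k \<le> r"
      using assms by (simp add: divide_le_eq)
    moreover have "0 < r / 2 ^ Suc k"
      using assms by simp
    ultimately show "x \<in> ball 0 r - {0}"
      using x by auto
  qed
next
  show "ball 0 r - {0} \<subseteq> (\<Union>k. ball (0::'a) (r / 2 ^ k) - ball 0 (r / 2 ^ Suc k))"
  proof
    fix x :: 'a assume x: "x \<in> ball 0 r - {0}"
    then have "0 < norm x" by simp
    then obtain n where "r / norm x < 2 ^ n"
      using real_arch_pow[of 2 "r / norm x"] by auto
    then have "r / 2 ^ n \<le> norm x"
      using \<open>0 < norm x\<close> by (simp add: field_simps)
    moreover have "\<not> r / 2 ^ 0 \<le> norm x"
      using x by simp
    ultimately obtain k where "\<not> r / 2 ^ k \<le> norm x" "r / 2 ^ Suc k \<le> norm x"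
      using exists_least_lemma[of "\<lambda>k. r / 2 ^ k \<le> norm x"] by blast
    then have "x \<in> ball 0 (r / 2 ^ k) - ball 0 (r / 2 ^ Suc k)"
      by simp
    then show "x \<in> (\<Union>k. ball 0 (r / 2 ^ k) - ball 0 (r / 2 ^ Suc k))"
      by blast
  qed
qed

lemma open_M0_superlevel:
  fixes f :: "'a::euclidean_space \<Rightarrow> real"
  shows "open {x. t < M0 f x}"
proof -
  define avg where "avg r = ennreal (1 / measure lebesgue (ball (0::'a) r)) *
      (\<integral>\<^sup>+ y\<in>ball 0 r. ennreal \<bar>f y\<bar> \<partial>lebesgue)" for r
  have "M0 f x = (SUP r\<in>{r. norm x < r}. avg r)" for x
    by (simp add: M0_def avg_def)
  then have "{x. t < M0 f x} = (\<Union>r\<in>{r. t < avg r}. ball 0 r)"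
    by (auto simp: less_SUP_iff)
  then show ?thesis by (simp add: open_UN)
qed

lemma borel_measurable_M0 [measurable]: "M0 f \<in> borel_measurable lebesgue"
  by (rule borel_measurableI_greater) (simp add: open_M0_superlevel borel_open)

section \<open>Weighted Morrey norms\<close>

lemma ball_mean_le_morrey_norm:
  "is_ball B \<Longrightarrow> epowr (ennreal (1 / \<phi> B) * wint p w g B) (1 / p) \<le> morrey_norm p \<phi> w g"
  unfolding morrey_norm_def by (rule SUP_upper) simp

lemma wint_indicator:
  "0 < p \<Longrightarrow> wint p w (\<lambda>x. ennreal (indicator S x)) B = (\<integral>\<^sup>+ x\<in>B \<inter> S. ennreal (w x) \<partial>lebesgue)"
  unfolding wint_def by (intro nn_integral_cong) (auto split: split_indicator)

lemma integral_le_morrey_dual_norm: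
  assumes "in_morrey p \<phi> w g" "morrey_norm p \<phi> w (\<lambda>x. ennreal \<bar>g x\<bar>) \<le> 1"
  shows "(\<integral>\<^sup>+ y\<in>S. ennreal \<bar>g y\<bar> \<partial>lebesgue) \<le> morrey_dual_norm p \<phi> w (indicator S)"
proof -
  have "(\<integral>\<^sup>+ y\<in>S. ennreal \<bar>g y\<bar> \<partial>lebesgue) = (\<integral>\<^sup>+ x. ennreal \<bar>g x * indicator S x\<bar> \<partial>lebesgue)"
    by (intro nn_integral_cong) (auto split: split_indicator)
  also have "\<dots> \<le> morrey_dual_norm p \<phi> w (indicator S)"
    unfolding morrey_dual_norm_def using assms by (intro SUP_upper) auto
  finally show ?thesis .
qed

lemma indicator_norm_mult_dual_norm_le_A0_const:
  fixes \<phi> :: "'a::euclidean_space set \<Rightarrow> real"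
  assumes "0 < r"
  shows "morrey_norm p \<phi> w (\<lambda>x. ennreal (indicator (ball 0 r) x)) * morrey_dual_norm p \<phi> w (indicator (ball 0 r))
      \<le> A0_const p \<phi> w * ennreal (measure lebesgue (ball (0::'a) r))"
proof -
  let ?X = "morrey_norm p \<phi> w (\<lambda>x. ennreal (indicator (ball 0 r) x)) * morrey_dual_norm p \<phi> w (indicator (ball 0 r))"
  let ?m = "ennreal (measure lebesgue (ball (0::'a) r))"
  have m: "?m \<noteq> 0" "?m < top"
    using content_ball_pos[OF assms, of "0::'a"] by auto
  have "?X / ?m \<le> A0_const p \<phi> w"
    unfolding A0_const_def emeasure_lebesgue_ball using assms by (intro SUP_upper2[of r]) auto
  then have "?X / ?m * ?m \<le> A0_const p \<phi> w * ?m"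
    by (rule mult_right_mono) simp
  then show ?thesis
    using m by (simp add: ennreal_divide_times)
qed

lemma M0_bounded_weak_iff: "M0_bounded_weak p \<phi> w \<longleftrightarrow> M0_norm_weak p \<phi> w < top"
  unfolding M0_bounded_weak_def M0_norm_weak_def Inf_bound_less_top_iff ..

lemma M0_bounded_strong_iff: "M0_bounded_strong p \<phi> w \<longleftrightarrow> M0_norm_strong p \<phi> w < top"
  unfolding M0_bounded_strong_def M0_norm_strong_def Inf_bound_less_top_iff ..

locale morrey_weight =
  fixes p :: real and \<phi> :: "'a::euclidean_space set \<Rightarrow> real" and w :: "'a \<Rightarrow> real"
  assumes p_pos: "0 < p"
    and phi_pos: "is_ball B \<Longrightarrow> 0 < \<phi> B"
    and w_measurable [measurable]: "w \<in> borel_measurable lebesgue"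
begin

abbreviation mnorm :: "('a \<Rightarrow> real) \<Rightarrow> ennreal" where
  "mnorm f \<equiv> morrey_norm p \<phi> w (\<lambda>x. ennreal \<bar>f x\<bar>)"

abbreviation A0 :: ennreal where
  "A0 \<equiv> A0_const p \<phi> w"

lemma morrey_norm_le_iff:
  "morrey_norm p \<phi> w g \<le> K \<longleftrightarrow> (\<forall>B. is_ball B \<longrightarrow> wint p w g B \<le> epowr K p * ennreal (\<phi> B))"
  unfolding morrey_norm_def
  by (simp add: SUP_le_iff epowr_le_iff_le_epowr p_pos ennreal_inverse_mult_le_iff phi_pos)

lemma morrey_norm_cmult:
  assumes "0 \<le> c" and [measurable]: "g \<in> borel_measurable lebesgue"
  shows "morrey_norm p \<phi> w (\<lambda>x. ennreal c * g x) = ennreal c * morrey_norm p \<phi> w g"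
proof -
  have wint: "wint p w (\<lambda>x. ennreal c * g x) B = epowr (ennreal c) p * wint p w g B" if "is_ball B" for B
  proof -
    have [measurable]: "B \<in> sets lebesgue"
      using that by (rule sets_lebesgue_is_ball)
    have "wint p w (\<lambda>x. ennreal c * g x) B =
        (\<integral>\<^sup>+ x. epowr (ennreal c) p * (epowr (g x) p * ennreal (w x) * indicator B x) \<partial>lebesgue)"
      unfolding wint_def by (intro nn_integral_cong) (simp add: epowr_mult[OF p_pos] mult.assoc)
    also have "\<dots> = epowr (ennreal c) p * wint p w g B"
      unfolding wint_def by (rule nn_integral_cmult) measurable
    finally show ?thesis .
  qed
  have "epowr (ennreal (1 / \<phi> B) * wint p w (\<lambda>x. ennreal c * g x) B) (1 / p) =
        ennreal c * epowr (ennreal (1 / \<phi> B) * wint p w g B) (1 / p)" if "is_ball B" for B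
    using p_pos by (simp add: wint[OF that] mult.left_commute epowr_mult epowr_epowr_inverse)
  then show ?thesis
    unfolding morrey_norm_def SUP_mult_left_ennreal by (intro SUP_cong) auto
qed

lemma in_morrey_cmult:
  assumes "0 \<le> c" and f: "in_morrey p \<phi> w f"
  shows "in_morrey p \<phi> w (\<lambda>x. c * f x)"
    and "mnorm (\<lambda>x. c * f x) = ennreal c * mnorm f"
proof -
  have [measurable]: "f \<in> borel_measurable lebesgue"
    using f by (simp add: in_morrey_def)
  show norm: "mnorm (\<lambda>x. c * f x) = ennreal c * mnorm f"
    using morrey_norm_cmult[OF assms(1), of "\<lambda>x. ennreal \<bar>f x\<bar>"] assms(1)
    by (simp add: abs_mult ennreal_mult)
  show "in_morrey p \<phi> w (\<lambda>x. c * f x)"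
    using f unfolding in_morrey_def norm by (auto simp: ennreal_mult_less_top)
qed

lemma indicator_norm_mult_integral_le:
  assumes "A0 < top" and f: "in_morrey p \<phi> w f" and "0 < r"
  shows "morrey_norm p \<phi> w (\<lambda>x. ennreal (indicator (ball 0 r) x)) * (\<integral>\<^sup>+ y\<in>ball 0 r. ennreal \<bar>f y\<bar> \<partial>lebesgue)
    \<le> A0 * ennreal (measure lebesgue (ball (0::'a) r)) * mnorm f"
proof (rule ennreal_le_mult_of_scaled_le)
  have [measurable]: "f \<in> borel_measurable lebesgue"
    using f by (simp add: in_morrey_def)
  fix c :: real assume c: "0 < c" "ennreal c * mnorm f \<le> 1"
  let ?N = "morrey_norm p \<phi> w (\<lambda>x. ennreal (indicator (ball 0 r) x))"
  let ?D = "morrey_dual_norm p \<phi> w (indicator (ball 0 r))"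
  have "ennreal c * (\<integral>\<^sup>+ y\<in>ball 0 r. ennreal \<bar>f y\<bar> \<partial>lebesgue) =
      (\<integral>\<^sup>+ y. ennreal c * (ennreal \<bar>f y\<bar> * indicator (ball 0 r) y) \<partial>lebesgue)"
    by (rule nn_integral_cmult[symmetric]) measurable
  also have "\<dots> = (\<integral>\<^sup>+ y\<in>ball 0 r. ennreal \<bar>c * f y\<bar> \<partial>lebesgue)"
    using c(1) by (intro nn_integral_cong) (simp add: abs_mult ennreal_mult mult.assoc)
  also have "\<dots> \<le> ?D"
    by (rule integral_le_morrey_dual_norm) (use in_morrey_cmult[OF _ f, of c] c in auto)
  finally have "ennreal c * (\<integral>\<^sup>+ y\<in>ball 0 r. ennreal \<bar>f y\<bar> \<partial>lebesgue) \<le> ?D" .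
  from mult_left_mono[OF this, of ?N]
  have "ennreal c * (?N * (\<integral>\<^sup>+ y\<in>ball 0 r. ennreal \<bar>f y\<bar> \<partial>lebesgue)) \<le> ?N * ?D"
    by (simp add: mult.left_commute)
  also have "\<dots> \<le> A0 * ennreal (measure lebesgue (ball (0::'a) r))"
    by (rule indicator_norm_mult_dual_norm_le_A0_const) fact
  finally show "ennreal c * (?N * (\<integral>\<^sup>+ y\<in>ball 0 r. ennreal \<bar>f y\<bar> \<partial>lebesgue))
      \<le> A0 * ennreal (measure lebesgue (ball (0::'a) r))" .
next
  show "mnorm f < top" using f by (simp add: in_morrey_def)
  show "A0 * ennreal (measure lebesgue (ball 0 r)) < top"
    using \<open>A0 < top\<close> by (simp add: ennreal_mult_less_top)
qed

lemma weak_morrey_norm_le_morrey_norm: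
  assumes [measurable]: "g \<in> borel_measurable lebesgue"
  shows "weak_morrey_norm p \<phi> w g \<le> morrey_norm p \<phi> w g"
  unfolding weak_morrey_norm_def
proof (intro SUP_least, clarify)
  fix B :: "'a set" and t :: real assume B: "is_ball B" and t: "0 < t"
  have [measurable]: "B \<in> sets lebesgue"
    using B by (rule sets_lebesgue_is_ball)
  define W where "W = (\<integral>\<^sup>+ x\<in>{x\<in>B. ennreal t < g x}. ennreal (w x) \<partial>lebesgue)"
  have "ennreal (t powr p) * W = (\<integral>\<^sup>+ x. ennreal (t powr p) * (ennreal (w x) * indicator {x\<in>B. ennreal t < g x} x) \<partial>lebesgue)"
    unfolding W_def by (rule nn_integral_cmult[symmetric]) measurable
  also have "\<dots> \<le> wint p w g B"
    unfolding wint_def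
  proof (intro nn_integral_mono)
    fix x
    have "ennreal t < g x \<Longrightarrow> epowr (ennreal t) p \<le> epowr (g x) p"
      using p_pos by (intro epowr_mono) auto
    then show "ennreal (t powr p) * (ennreal (w x) * indicator {x\<in>B. ennreal t < g x} x)
        \<le> epowr (g x) p * ennreal (w x) * indicator B x"
      using t by (auto split: split_indicator simp: epowr_ennreal intro: mult_right_mono)
  qed
  finally have "ennreal (1 / \<phi> B) * (ennreal (t powr p) * W) \<le> ennreal (1 / \<phi> B) * wint p w g B"
    by (rule mult_left_mono) simp
  then have "epowr (ennreal (t powr p) * W * ennreal (1 / \<phi> B)) (1 / p)
      \<le> epowr (ennreal (1 / \<phi> B) * wint p w g B) (1 / p)"
    using p_pos by (intro epowr_mono) (auto simp: mult_ac)
  also have "\<dots> \<le> morrey_norm p \<phi> w g"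
    using B by (rule ball_mean_le_morrey_norm)
  finally show "ennreal t * epowr W (1 / p) * ennreal (\<phi> B powr (- 1 / p)) \<le> morrey_norm p \<phi> w g"
    using p_pos t phi_pos[OF B] by (simp add: epowr_mult epowr_ennreal powr_powr powr_divide powr_minus_divide)
qed

lemma indicator_norm_le_weak_morrey_norm:
  assumes s: "0 < s" and S: "\<And>x. x \<in> S \<Longrightarrow> ennreal s < g x"
  shows "ennreal s * morrey_norm p \<phi> w (\<lambda>x. ennreal (indicator S x)) \<le> weak_morrey_norm p \<phi> w g"
  unfolding morrey_norm_def SUP_mult_left_ennreal
proof (intro SUP_least, clarify)
  fix B :: "'a set" assume B: "is_ball B"
  define W where "W = (\<integral>\<^sup>+ x\<in>{x\<in>B. ennreal s < g x}. ennreal (w x) \<partial>lebesgue)"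
  have "wint p w (\<lambda>x. ennreal (indicator S x)) B \<le> W"
    unfolding W_def wint_indicator[OF p_pos] using S by (intro nn_set_integral_set_mono) auto
  then have "ennreal (1 / \<phi> B) * wint p w (\<lambda>x. ennreal (indicator S x)) B \<le> ennreal (1 / \<phi> B) * W"
    by (rule mult_left_mono) simp
  then have "ennreal s * epowr (ennreal (1 / \<phi> B) * wint p w (\<lambda>x. ennreal (indicator S x)) B) (1 / p)
      \<le> ennreal s * epowr (W * ennreal (1 / \<phi> B)) (1 / p)"
    using p_pos by (intro mult_left_mono epowr_mono) (auto simp: mult.commute)
  also have "\<dots> = ennreal s * epowr W (1 / p) * ennreal (\<phi> B powr (- 1 / p))"
    using p_pos phi_pos[OF B] by (simp add: epowr_mult epowr_ennreal powr_divide powr_minus_divide mult.assoc)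
  also have "\<dots> \<le> weak_morrey_norm p \<phi> w g"
    unfolding weak_morrey_norm_def W_def using B s by (intro SUP_upper2[of "(B, s)"]) auto
  finally show "ennreal s * epowr (ennreal (1 / \<phi> B) * wint p w (\<lambda>x. ennreal (indicator S x)) B) (1 / p)
      \<le> weak_morrey_norm p \<phi> w g" .
qed

lemma A0_const_le_of_weak_bound:
  assumes K: "\<And>f. in_morrey p \<phi> w f \<Longrightarrow> weak_morrey_norm p \<phi> w (M0 f) \<le> K * mnorm f"
  shows "A0 \<le> K"
  unfolding A0_const_def morrey_dual_norm_def SUP_mult_left_ennreal SUP_divide_ennreal
proof (intro SUP_least, clarify)
  fix r :: real and f assume r: "0 < r" and f: "in_morrey p \<phi> w f" "mnorm f \<le> 1"
  define N where "N = morrey_norm p \<phi> w (\<lambda>x. ennreal (indicator (ball (0::'a) r) x))"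
  define V where "V = measure lebesgue (ball (0::'a) r)"
  define I where "I = (\<integral>\<^sup>+ y\<in>ball 0 r. ennreal \<bar>f y\<bar> \<partial>lebesgue)"
  have "0 < V"
    unfolding V_def using content_ball_pos[OF r] by simp
  have "(\<integral>\<^sup>+ x. ennreal \<bar>f x * indicator (ball 0 r) x\<bar> \<partial>lebesgue) = I"
    unfolding I_def by (intro nn_integral_cong) (auto split: split_indicator)
  moreover have "N * I / ennreal V = ennreal (1 / V) * I * N"
    using \<open>0 < V\<close> by (simp add: divide_ennreal_def inverse_ennreal mult_ac inverse_eq_divide)
  moreover have "ennreal (1 / V) * I * N \<le> K"
  proof (rule ennreal_mult_le_of_forall_less)
    fix s :: real assume s: "0 < s" "ennreal s < ennreal (1 / V) * I"
    have "ennreal (1 / V) * I \<le> M0 f x" if "x \<in> ball 0 r" for x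
      unfolding M0_def V_def I_def using that by (intro SUP_upper2[of r]) auto
    then have "ennreal s * N \<le> weak_morrey_norm p \<phi> w (M0 f)"
      unfolding N_def using s by (intro indicator_norm_le_weak_morrey_norm) (auto intro: less_le_trans)
    also have "\<dots> \<le> K * mnorm f"
      using f(1) by (rule K)
    also have "\<dots> \<le> K"
      using mult_left_mono[OF f(2), of K] by simp
    finally show "ennreal s * N \<le> K" .
  qed
  ultimately show "N * (\<integral>\<^sup>+ x. ennreal \<bar>f x * indicator (ball 0 r) x\<bar> \<partial>lebesgue)
      / emeasure lebesgue (ball (0::'a) r) \<le> K"
    unfolding N_def V_def emeasure_lebesgue_ball by simp
qed

lemma M0_mult_mean_le:
  assumes A0: "A0 < top" and f: "in_morrey p \<phi> w f"
    and \<rho>: "0 < \<rho>" "\<rho> \<le> 2 * norm x" and E: "is_ball E'" "E \<subseteq> E' \<inter> ball 0 \<rho>"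
  shows "M0 f x * epowr (ennreal (1 / \<phi> E') * (\<integral>\<^sup>+ y\<in>E. ennreal (w y) \<partial>lebesgue)) (1 / p)
    \<le> ennreal (2 ^ DIM('a)) * A0 * mnorm f"
proof -
  define X where "X = epowr (ennreal (1 / \<phi> E') * (\<integral>\<^sup>+ y\<in>E. ennreal (w y) \<partial>lebesgue)) (1 / p)"
  define V where "V r = measure lebesgue (ball (0::'a) r)" for r
  define I where "I r = (\<integral>\<^sup>+ y\<in>ball (0::'a) r. ennreal \<bar>f y\<bar> \<partial>lebesgue)" for r
  define N where "N r = morrey_norm p \<phi> w (\<lambda>x. ennreal (indicator (ball (0::'a) r) x))" for r
  have "ennreal (1 / V r) * I r * X \<le> ennreal (2 ^ DIM('a)) * A0 * mnorm f" if "norm x < r" for r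
  proof -
    \<comment> \<open>Passing to \<open>r' = max r \<rho>\<close> costs a factor \<open>2 ^ DIM('a)\<close> in the average but puts \<open>E\<close> inside \<open>ball 0 r'\<close>.\<close>
    define r' where "r' = max r \<rho>"
    have r: "0 < r" "r \<le> r'" "r' \<le> 2 * r" "\<rho> \<le> r'"
      using that \<rho> unfolding r'_def by (auto intro: le_less_trans[OF norm_ge_zero])
    have "(\<integral>\<^sup>+ y\<in>E. ennreal (w y) \<partial>lebesgue) \<le> (\<integral>\<^sup>+ y\<in>E' \<inter> ball 0 r'. ennreal (w y) \<partial>lebesgue)"
      using E(2) r(4) by (intro nn_set_integral_set_mono) auto
    then have "X \<le> epowr (ennreal (1 / \<phi> E') * wint p w (\<lambda>x. ennreal (indicator (ball 0 r') x)) E') (1 / p)"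
      unfolding X_def using p_pos by (intro epowr_mono mult_left_mono) (auto simp: wint_indicator)
    also have "\<dots> \<le> N r'"
      unfolding N_def using E(1) by (rule ball_mean_le_morrey_norm)
    finally have "ennreal (1 / V r) * I r * X \<le> ennreal (2 ^ DIM('a) / V r') * I r' * N r'"
      unfolding V_def I_def using r by (intro mult_mono ball_average_le_dilate) auto
    also have "\<dots> = ennreal (2 ^ DIM('a) / V r') * (N r' * I r')"
      by (simp add: mult_ac)
    also have "\<dots> \<le> ennreal (2 ^ DIM('a) / V r') * (A0 * ennreal (V r') * mnorm f)"
      unfolding N_def I_def V_def using r
      by (intro mult_left_mono indicator_norm_mult_integral_le[OF A0 f]) auto
    also have "\<dots> = (ennreal (2 ^ DIM('a) / V r') * ennreal (V r')) * A0 * mnorm f"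
      by (simp add: mult_ac)
    also have "ennreal (2 ^ DIM('a) / V r') * ennreal (V r') = ennreal (2 ^ DIM('a))"
      unfolding V_def using r content_ball_pos[of r' "0::'a"] by (simp add: ennreal_mult[symmetric])
    finally show ?thesis .
  qed
  then show ?thesis
    unfolding M0_def SUP_mult_right_ennreal X_def[symmetric] V_def I_def by (intro SUP_least) auto
qed

lemma wint_M0_away_from_origin_le:
  assumes A0: "A0 < top" and f: "in_morrey p \<phi> w f"
    and \<rho>: "0 < \<rho>" and E: "is_ball E'" "E \<in> sets lebesgue" "E \<subseteq> E' \<inter> ball 0 \<rho>"
    and far: "\<And>x. x \<in> E \<Longrightarrow> \<rho> \<le> 2 * norm x"
  shows "wint p w (M0 f) E \<le> epowr (ennreal (2 ^ DIM('a)) * A0 * mnorm f) p * ennreal (\<phi> E')"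
proof -
  define W where "W = (\<integral>\<^sup>+ y\<in>E. ennreal (w y) \<partial>lebesgue)"
  define Y where "Y = ennreal (1 / \<phi> E') * W"
  define K where "K = epowr (ennreal (2 ^ DIM('a)) * A0 * mnorm f) p"
  define S where "S = (SUP x\<in>E. epowr (M0 f x) p)"
  have "epowr (M0 f x) p * Y \<le> K" if "x \<in> E" for x
  proof -
    have "epowr (M0 f x * epowr Y (1 / p)) p \<le> K"
      unfolding K_def Y_def W_def using M0_mult_mean_le[OF A0 f \<rho> far[OF that] E(1,3)] p_pos
      by (intro epowr_mono)
    then show ?thesis
      using p_pos by (simp add: epowr_mult epowr_epowr)
  qed
  then have SY: "S * Y \<le> K"
    unfolding S_def SUP_mult_right_ennreal by (intro SUP_least)
  have [measurable]: "E \<in> sets lebesgue" by fact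
  have "wint p w (M0 f) E \<le> (\<integral>\<^sup>+ x. S * (ennreal (w x) * indicator E x) \<partial>lebesgue)"
    unfolding wint_def S_def
    by (intro nn_integral_mono) (auto split: split_indicator intro: mult_right_mono SUP_upper)
  also have "\<dots> = S * W"
    unfolding W_def by (rule nn_integral_cmult) measurable
  also have "W = Y * ennreal (\<phi> E')"
    unfolding Y_def using phi_pos[OF E(1)] by (simp add: mult_ac ennreal_mult[symmetric])
  also have "S * (Y * ennreal (\<phi> E')) \<le> K * ennreal (\<phi> E')"
    using SY by (simp add: mult.assoc[symmetric] mult_right_mono)
  finally show ?thesis
    unfolding K_def .
qed

lemma wint_M0_ball_far:
  assumes "A0 < top" "in_morrey p \<phi> w f" "0 < R" "3 * R \<le> norm c"
  shows "wint p w (M0 f) (ball c R) \<le> epowr (ennreal (2 ^ DIM('a)) * A0 * mnorm f) p * ennreal (\<phi> (ball c R))"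
proof (rule wint_M0_away_from_origin_le[OF assms(1,2)])
  show "0 < norm c + R" "is_ball (ball c R)" "ball c R \<in> sets lebesgue"
    using assms(3,4) by auto
  show "ball c R \<subseteq> ball c R \<inter> ball 0 (norm c + R)"
    using norm_bounds_of_mem_ball(1) by auto
  fix x assume "x \<in> ball c R"
  then have "norm c - R < norm x"
    by (rule norm_bounds_of_mem_ball(2))
  then show "norm c + R \<le> 2 * norm x"
    using assms(4) by linarith
qed

lemma wint_M0_ball_near:
  assumes A0: "A0 < top" and f: "in_morrey p \<phi> w f" and R: "0 < R" "norm c < 3 * R"
  shows "wint p w (M0 f) (ball c R)
    \<le> epowr (ennreal (2 ^ DIM('a)) * A0 * mnorm f) p * (\<Sum>k. ennreal (\<phi> (ball 0 (4 * R / 2 ^ k))))"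
proof -
  define K where "K = epowr (ennreal (2 ^ DIM('a)) * A0 * mnorm f) p"
  define An where "An k = ball (0::'a) (4 * R / 2 ^ k) - ball 0 (4 * R / 2 ^ Suc k)" for k
  define g where "g x = epowr (M0 f x) p * ennreal (w x)" for x
  have [measurable]: "An k \<in> sets lebesgue" for k
    unfolding An_def by measurable
  have annuli: "(\<Union>k. An k) = ball 0 (4 * R) - {0}"
    unfolding An_def using R(1) by (intro Union_dyadic_annuli) simp
  have "wint p w (M0 f) (ball c R) \<le> wint p w (M0 f) (ball 0 (4 * R))"
    unfolding wint_def using R(2)
    by (intro nn_set_integral_set_mono subsetI) (fastforce dest: norm_bounds_of_mem_ball(1))
  also have "\<dots> = (\<integral>\<^sup>+ x\<in>(\<Union>k. An k). g x \<partial>lebesgue)"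
    unfolding wint_def g_def annuli
    by (intro nn_integral_cong_AE, use AE_completion[OF AE_lborel_singleton[of 0]] in eventually_elim)
      (auto split: split_indicator)
  also have "\<dots> = (\<Sum>k. (\<integral>\<^sup>+ x\<in>An k. g x \<partial>lebesgue))"
    unfolding An_def using R(1) unfolding g_def
    by (intro nn_integral_disjoint_family disjoint_family_dyadic_annuli) auto
  also have "\<dots> \<le> (\<Sum>k. K * ennreal (\<phi> (ball 0 (4 * R / 2 ^ k))))"
  proof (intro suminf_le summableI)
    fix k
    show "(\<integral>\<^sup>+ x\<in>An k. g x \<partial>lebesgue) \<le> K * ennreal (\<phi> (ball 0 (4 * R / 2 ^ k)))"
      unfolding g_def K_def wint_def[symmetric]
      by (rule wint_M0_away_from_origin_le[OF A0 f, where \<rho> = "4 * R / 2 ^ k"]) (use R(1) in \<open>auto simp: An_def\<close>)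
  qed
  finally show ?thesis
    unfolding K_def by simp
qed

lemma morrey_norm_M0_le:
  assumes A0: "A0 < top" and f: "in_morrey p \<phi> w f" and C: "1 \<le> C"
    and dyadic: "\<And>c R. 0 < R \<Longrightarrow> norm c < 3 * R \<Longrightarrow>
      (\<Sum>k. ennreal (\<phi> (ball 0 (4 * R / 2 ^ k)))) \<le> ennreal C * ennreal (\<phi> (ball c R))"
  shows "morrey_norm p \<phi> w (M0 f) \<le> ennreal (C powr (1 / p) * 2 ^ DIM('a)) * A0 * mnorm f"
proof -
  define K where "K = epowr (ennreal (2 ^ DIM('a)) * A0 * mnorm f) p"
  have "epowr (ennreal (C powr (1 / p) * 2 ^ DIM('a)) * A0 * mnorm f) p
      = epowr (ennreal (C powr (1 / p)) * (ennreal (2 ^ DIM('a)) * A0 * mnorm f)) p"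
    by (simp add: ennreal_mult mult_ac)
  also have "\<dots> = ennreal C * K"
    unfolding K_def using p_pos C by (simp add: epowr_mult epowr_ennreal powr_powr)
  finally have eq: "epowr (ennreal (C powr (1 / p) * 2 ^ DIM('a)) * A0 * mnorm f) p = ennreal C * K" .
  have "wint p w (M0 f) (ball c R) \<le> ennreal C * K * ennreal (\<phi> (ball c R))" if "0 < R" for c R
  proof (cases "3 * R \<le> norm c")
    case True
    have "wint p w (M0 f) (ball c R) \<le> 1 * K * ennreal (\<phi> (ball c R))"
      unfolding K_def using wint_M0_ball_far[OF A0 f that True] by simp
    also have "\<dots> \<le> ennreal C * K * ennreal (\<phi> (ball c R))"
      using C by (intro mult_right_mono) auto
    finally show ?thesis .
  next
    case False
    have "wint p w (M0 f) (ball c R) \<le> K * (\<Sum>k. ennreal (\<phi> (ball 0 (4 * R / 2 ^ k))))"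
      unfolding K_def using wint_M0_ball_near[OF A0 f that] False by simp
    also have "\<dots> \<le> K * (ennreal C * ennreal (\<phi> (ball c R)))"
      using dyadic[OF that] False by (intro mult_left_mono) auto
    finally show ?thesis
      by (simp add: mult_ac)
  qed
  then show ?thesis
    unfolding morrey_norm_le_iff eq is_ball_def by auto
qed

lemma A0_const_le_M0_norm_weak: "A0 \<le> M0_norm_weak p \<phi> w"
  unfolding M0_norm_weak_def by (intro Inf_greatest) (auto intro: A0_const_le_of_weak_bound)

lemma M0_norm_weak_le_M0_norm_strong: "M0_norm_weak p \<phi> w \<le> M0_norm_strong p \<phi> w"
  unfolding M0_norm_weak_def M0_norm_strong_def
  by (intro Inf_superset_mono) (auto intro: order_trans[OF weak_morrey_norm_le_morrey_norm])

lemma M0_bounded_iff_in_A0: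
  assumes "M0_norm_strong p \<phi> w \<le> ennreal C * A0"
  shows "M0_bounded_weak p \<phi> w \<longleftrightarrow> in_A0 p \<phi> w"
    and "in_A0 p \<phi> w \<longleftrightarrow> M0_bounded_strong p \<phi> w"
proof -
  have "A0 < top \<Longrightarrow> M0_norm_strong p \<phi> w < top"
    using le_less_trans[OF assms] by (simp add: ennreal_mult_less_top)
  then show "M0_bounded_weak p \<phi> w \<longleftrightarrow> in_A0 p \<phi> w" "in_A0 p \<phi> w \<longleftrightarrow> M0_bounded_strong p \<phi> w"
    unfolding in_A0_def M0_bounded_weak_iff M0_bounded_strong_iff
    using A0_const_le_M0_norm_weak M0_norm_weak_le_M0_norm_strong by (auto intro: le_less_trans)
qed

end

section \<open>Doubling functions of balls\<close>

locale doubling_phi =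
  fixes \<phi> :: "'a::euclidean_space set \<Rightarrow> real" and Cd Cr \<delta> :: real
  assumes phi_pos: "is_ball B \<Longrightarrow> 0 < \<phi> B"
    and doubling: "0 < r \<Longrightarrow> \<phi> (ball x (2 * r)) \<le> Cd * \<phi> (ball x r)"
    and reverse_doubling_exponent: "0 < \<delta>"
    and reverse_doubling: "is_ball B1 \<Longrightarrow> is_ball B2 \<Longrightarrow> B1 \<subseteq> B2 \<Longrightarrow>
      \<phi> B1 / \<phi> B2 \<le> Cr * (measure lebesgue B1 / measure lebesgue B2) powr \<delta>"

lemma admissible_phi_imp_doubling_phi:
  assumes "admissible_phi \<phi>"
  obtains Cd Cr \<delta> where "doubling_phi \<phi> Cd Cr \<delta>"
proof -
  obtain Cd \<delta> Cr where "\<forall>x r. 0 < r \<longrightarrow> \<phi> (ball x (2 * r)) \<le> Cd * \<phi> (ball x r)" "0 < \<delta>"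
    "\<forall>B1 B2. is_ball B1 \<longrightarrow> is_ball B2 \<longrightarrow> B1 \<subseteq> B2 \<longrightarrow>
      \<phi> B1 / \<phi> B2 \<le> Cr * (measure lebesgue B1 / measure lebesgue B2) powr \<delta>"
    using assms unfolding admissible_phi_def by (elim conjE exE)
  moreover have "\<forall>B. is_ball B \<longrightarrow> 0 < \<phi> B"
    using assms unfolding admissible_phi_def by (elim conjE)
  ultimately have "doubling_phi \<phi> Cd Cr \<delta>"
    by unfold_locales simp_all
  then show ?thesis
    by (rule that)
qed

context doubling_phi
begin

lemma one_le_Cr: "1 \<le> Cr"
  using reverse_doubling[of "ball 0 1" "ball 0 1"] phi_pos[of "ball 0 1"] content_ball_pos[of 1 "0::'a"]
  by simp

lemma zero_less_Cd: "0 < Cd"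
proof -
  have "0 < Cd * \<phi> (ball (0::'a) 1)"
    using doubling[of 1 0] phi_pos[of "ball 0 2"] by simp
  then show ?thesis
    using phi_pos[of "ball 0 1"] by (simp add: zero_less_mult_iff)
qed

lemma dyadic_volume_ratio_powr_bounds:
  shows "0 < (1 / 2 ^ DIM('a) :: real) powr \<delta>" and "(1 / 2 ^ DIM('a) :: real) powr \<delta> < 1"
proof -
  have "(1::real) < 2 ^ DIM('a)"
    by (rule one_less_power) auto
  then show "0 < (1 / 2 ^ DIM('a) :: real) powr \<delta>" "(1 / 2 ^ DIM('a) :: real) powr \<delta> < 1"
    using reverse_doubling_exponent by (simp_all add: powr01_less_one)
qed

lemma phi_le_of_subset:
  assumes "is_ball B1" "is_ball B2" "B1 \<subseteq> B2"
  shows "\<phi> B1 \<le> Cr * \<phi> B2"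
proof -
  obtain x r where B2: "0 < r" "B2 = ball x r"
    using assms(2) unfolding is_ball_def by blast
  have "measure lebesgue B1 \<le> measure lebesgue (ball x r)"
    using assms(3) sets_lebesgue_is_ball[OF assms(1)]
    by (intro measure_mono_fmeasurable) (auto simp: B2(2))
  then have m: "measure lebesgue B1 \<le> measure lebesgue B2" "0 < measure lebesgue B2"
    using B2 content_ball_pos[of r x] by simp_all
  have "\<phi> B1 / \<phi> B2 \<le> Cr * (measure lebesgue B1 / measure lebesgue B2) powr \<delta>"
    using assms by (rule reverse_doubling)
  also have "\<dots> \<le> Cr * 1"
    using m one_le_Cr reverse_doubling_exponent by (intro mult_left_mono powr_le1) auto
  finally show ?thesis
    using phi_pos[OF assms(2)] by (simp add: field_simps)
qed

lemma phi_ball_dilate_pow: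
  assumes "0 < r"
  shows "\<phi> (ball x (2 ^ k * r)) \<le> Cd ^ k * \<phi> (ball x r)"
proof (induction k)
  case (Suc k)
  have "\<phi> (ball x (2 ^ Suc k * r)) \<le> Cd * \<phi> (ball x (2 ^ k * r))"
    using doubling[of "2 ^ k * r" x] assms by (simp add: mult.assoc)
  also have "\<dots> \<le> Cd * (Cd ^ k * \<phi> (ball x r))"
    using Suc zero_less_Cd by (intro mult_left_mono) auto
  finally show ?case
    by (simp add: mult.assoc)
qed simp

lemma sum_phi_dyadic_balls_le:
  assumes "0 < r"
  shows "(\<Sum>k. ennreal (\<phi> (ball x (r / 2 ^ k))))
    \<le> ennreal (Cr / (1 - (1 / 2 ^ DIM('a)) powr \<delta>) * \<phi> (ball x r))"
proof -
  define q where "q = (1 / 2 ^ DIM('a) :: real) powr \<delta>"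
  have q: "0 < q" "q < 1"
    unfolding q_def by (fact dyadic_volume_ratio_powr_bounds)+
  have "\<phi> (ball x (r / 2 ^ k)) \<le> Cr * \<phi> (ball x r) * q ^ k" for k
  proof -
    have "measure lebesgue (ball x (r / 2 ^ k)) / measure lebesgue (ball x r) = (1 / 2 ^ DIM('a)) ^ k"
      using assms content_ball_conv_unit_ball[of "r / 2 ^ k" x] content_ball_conv_unit_ball[of r x]
        content_ball_pos[of 1 "0::'a"]
      by (simp add: power_divide power_mult[symmetric] mult.commute)
    then have "\<phi> (ball x (r / 2 ^ k)) / \<phi> (ball x r) \<le> Cr * ((1 / 2 ^ DIM('a)) ^ k) powr \<delta>"
      using reverse_doubling[of "ball x (r / 2 ^ k)" "ball x r"] assms
      by (simp add: subset_ball divide_le_eq)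
    also have "((1 / 2 ^ DIM('a) :: real) ^ k) powr \<delta> = ((1 / 2 ^ DIM('a)) powr real k) powr \<delta>"
      by (simp add: powr_realpow)
    also have "\<dots> = q ^ k"
      unfolding q_def by (simp add: powr_powr powr_power)
    finally show ?thesis
      using phi_pos[of "ball x r"] assms by (simp add: field_simps)
  qed
  then have "(\<Sum>k. ennreal (\<phi> (ball x (r / 2 ^ k)))) \<le> (\<Sum>k. ennreal (Cr * \<phi> (ball x r) * q ^ k))"
    by (intro suminf_le summableI ennreal_leI)
  also have "\<dots> = ennreal (Cr * \<phi> (ball x r) * (1 / (1 - q)))"
    using q one_le_Cr phi_pos[of "ball x r"] assms
    by (intro suminf_ennreal_eq sums_mult geometric_sums) auto
  finally show ?thesis
    unfolding q_def by simp
qed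

lemma dyadic_sum_le_phi_ball:
  obtains C where "1 \<le> C"
    and "\<And>c R. 0 < R \<Longrightarrow> norm c < 3 * R \<Longrightarrow>
      (\<Sum>k. ennreal (\<phi> (ball 0 (4 * R / 2 ^ k)))) \<le> ennreal C * ennreal (\<phi> (ball c R))"
proof
  define G where "G = Cr / (1 - (1 / 2 ^ DIM('a)) powr \<delta>)"
  have G: "0 \<le> G"
    unfolding G_def using one_le_Cr dyadic_volume_ratio_powr_bounds(2) by simp
  show "1 \<le> max 1 (G * Cr * Cd ^ 3)" by simp
  fix c :: 'a and R :: real assume R: "0 < R" "norm c < 3 * R"
  have "ball 0 (4 * R) \<subseteq> ball c (2 ^ 3 * R)"
  proof
    fix y :: 'a assume "y \<in> ball 0 (4 * R)"
    then have "norm c + norm y < 2 ^ 3 * R"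
      using R by simp
    then show "y \<in> ball c (2 ^ 3 * R)"
      using norm_triangle_ineq4[of c y] by (simp add: dist_norm)
  qed
  then have "\<phi> (ball 0 (4 * R)) \<le> Cr * \<phi> (ball c (2 ^ 3 * R))"
    using R(1) by (intro phi_le_of_subset) auto
  also have "\<dots> \<le> Cr * (Cd ^ 3 * \<phi> (ball c R))"
    using one_le_Cr R by (intro mult_left_mono phi_ball_dilate_pow) auto
  finally have "G * \<phi> (ball 0 (4 * R)) \<le> G * (Cr * (Cd ^ 3 * \<phi> (ball c R)))"
    using G by (rule mult_left_mono)
  also have "\<dots> = G * Cr * Cd ^ 3 * \<phi> (ball c R)"
    by (simp add: mult_ac)
  also have "\<dots> \<le> max 1 (G * Cr * Cd ^ 3) * \<phi> (ball c R)"
    using phi_pos[of "ball c R"] R by (intro mult_right_mono) auto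
  finally have bound: "G * \<phi> (ball 0 (4 * R)) \<le> max 1 (G * Cr * Cd ^ 3) * \<phi> (ball c R)" .
  have "(\<Sum>k. ennreal (\<phi> (ball 0 (4 * R / 2 ^ k)))) \<le> ennreal (G * \<phi> (ball 0 (4 * R)))"
    unfolding G_def using R(1) by (intro sum_phi_dyadic_balls_le) simp
  also have "\<dots> \<le> ennreal (max 1 (G * Cr * Cd ^ 3) * \<phi> (ball c R))"
    using bound by (rule ennreal_leI)
  finally show "(\<Sum>k. ennreal (\<phi> (ball 0 (4 * R / 2 ^ k)))) \<le> ennreal (max 1 (G * Cr * Cd ^ 3)) * ennreal (\<phi> (ball c R))"
    by (simp add: ennreal_mult')
qed

lemma M0_norm_strong_le_A0_const:
  assumes p: "0 < p"
  obtains C where "1 \<le> C"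
    and "\<And>w. w \<in> borel_measurable lebesgue \<Longrightarrow> M0_norm_strong p \<phi> w \<le> ennreal C * A0_const p \<phi> w"
proof -
  obtain C0 where C0: "1 \<le> C0"
    and dyadic: "\<And>c R. 0 < R \<Longrightarrow> norm c < 3 * R \<Longrightarrow>
      (\<Sum>k. ennreal (\<phi> (ball 0 (4 * R / 2 ^ k)))) \<le> ennreal C0 * ennreal (\<phi> (ball c R))"
    using dyadic_sum_le_phi_ball by blast
  define C where "C = C0 powr (1 / p) * 2 ^ DIM('a)"
  have "1 * 1 \<le> C"
    unfolding C_def using C0 p by (intro mult_mono ge_one_powr_ge_zero) auto
  then have C: "1 \<le> C" by simp
  show ?thesis
  proof (rule that[OF C])
    fix w :: "'a \<Rightarrow> real" assume "w \<in> borel_measurable lebesgue"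
    then interpret morrey_weight p \<phi> w
      using p phi_pos by unfold_locales
    show "M0_norm_strong p \<phi> w \<le> ennreal C * A0"
    proof (cases "A0 < top")
      case True
      then show ?thesis
        unfolding M0_norm_strong_def C_def
        by (intro Inf_lower) (auto intro: morrey_norm_M0_le[OF True _ C0 dyadic])
    next
      case False
      then have "A0 = top"
        using less_top by blast
      then show ?thesis
        using C by (simp add: ennreal_mult_top)
    qed
  qed
qed

end

theorem theorem3p2:
  fixes \<phi> :: "'a::euclidean_space set \<Rightarrow> real" and p :: real
  assumes "1 \<le> p" and "admissible_phi \<phi>"
  shows "\<exists>C::real. C > 0 \<and> (\<forall>w::'a \<Rightarrow> real. weight w \<longrightarrow>
     (\<forall>x r. r > 0 \<longrightarrow> in_morrey p \<phi> w (indicator (ball x r))) \<longrightarrow>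
       (M0_bounded_weak p \<phi> w \<longleftrightarrow> in_A0 p \<phi> w) \<and>
       (in_A0 p \<phi> w \<longleftrightarrow> M0_bounded_strong p \<phi> w) \<and>
       A0_const p \<phi> w \<le> ennreal C * M0_norm_weak p \<phi> w \<and>
       M0_norm_weak p \<phi> w \<le> ennreal C * A0_const p \<phi> w \<and>
       A0_const p \<phi> w \<le> ennreal C * M0_norm_strong p \<phi> w \<and>
       M0_norm_strong p \<phi> w \<le> ennreal C * A0_const p \<phi> w)"
proof -
  have p: "0 < p"
    using assms(1) by simp
  obtain Cd Cr \<delta> where dbl: "doubling_phi \<phi> Cd Cr \<delta>"
    using assms(2) by (rule admissible_phi_imp_doubling_phi)
  obtain C where C: "1 \<le> C"
    and strong: "\<And>w. w \<in> borel_measurable lebesgue \<Longrightarrow> M0_norm_strong p \<phi> w \<le> ennreal C * A0_const p \<phi> w"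
    using doubling_phi.M0_norm_strong_le_A0_const[OF dbl p] by blast
  have le_C: "x \<le> ennreal C * x" for x
    using mult_right_mono[of 1 "ennreal C" x] C by simp
  show ?thesis
  proof (intro exI[of _ C] conjI allI impI)
    fix w :: "'a \<Rightarrow> real" assume "weight w"
    then interpret morrey_weight p \<phi> w
      using p doubling_phi.phi_pos[OF dbl] by unfold_locales (simp_all add: weight_def)
    show strong_A0: "M0_norm_strong p \<phi> w \<le> ennreal C * A0"
      using w_measurable by (rule strong)
    show "M0_bounded_weak p \<phi> w \<longleftrightarrow> in_A0 p \<phi> w" "in_A0 p \<phi> w \<longleftrightarrow> M0_bounded_strong p \<phi> w"
      using strong_A0 by (rule M0_bounded_iff_in_A0)+
    show "A0 \<le> ennreal C * M0_norm_weak p \<phi> w" "A0 \<le> ennreal C * M0_norm_strong p \<phi> w"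
      using A0_const_le_M0_norm_weak M0_norm_weak_le_M0_norm_strong le_C by (blast intro: order_trans)+
    show "M0_norm_weak p \<phi> w \<le> ennreal C * A0"
      using M0_norm_weak_le_M0_norm_strong strong_A0 by (rule order_trans)
  qed (use C in simp)
qed

end
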